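(* Define real sequences by the Gauss–Legendre iteration: $a_0 = 1$, $b_0 = 1/\sqrt{2}$, $s_0 = \tfrac14$, and for $n \ge 0$ \[ a_{n+1} = \frac{a_n+b_n}{2},\quad b_{n+1} = \sqrt{a_n b_n},\quad c_{n+1} = a_n - a_{n+1},\quad s_{n+1} = s_n - 2^n c_{n+1}^2 . \] Define also sequences by the Borwein quartic iteration: $y_0 = \sqrt{2}-1$, $z_0 = 2y_0^2$, and for $n \ge 0$ \[ y_{n+1} = \frac{1-(1-y_n^4)^{1/4}}{1+(1-y_n^4)^{1/4}},\qquad z_{n+1} = z_n(1+y_{n+1})^4 - 2^{2n+3}y_{n+1}(1+y_{n+1}+y_{n+1}^2), \] and set $\pi_n = 1/z_n$. Then for every $n\ge 0$, \[ \pi_n = \frac{a_{2n+1}^2}{s_{2n}}. \]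
   Context: All square roots and fourth roots are the positive real roots; all quantities are computed in exact real arithmetic. *)

theory Defs
  imports Complex_Main
begin

fun gl :: "nat \<Rightarrow> real \<times> real \<times> real" where
  "gl 0 = (1, 1 / sqrt 2, 1/4)"
| "gl (Suc n) = (let (a, b, s) = gl n; a' = (a + b) / 2; c' = a - a'
                 in (a', sqrt (a * b), s - 2 ^ n * c'^2))"

definition gl_a :: "nat \<Rightarrow> real" where "gl_a n = fst (gl n)"
definition gl_b :: "nat \<Rightarrow> real" where "gl_b n = fst (snd (gl n))"
definition gl_s :: "nat \<Rightarrow> real" where "gl_s n = snd (snd (gl n))"

fun borwein :: "nat \<Rightarrow> real \<times> real" where
  "borwein 0 = (sqrt 2 - 1, 2 * (sqrt 2 - 1)^2)"
| "borwein (Suc n) = (let (y, z) = borwein n;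
                          r = root 4 (1 - y^4);
                          y' = (1 - r) / (1 + r)
                      in (y', z * (1 + y')^4 - 2 ^ (2*n+3) * y' * (1 + y' + y'^2)))"

definition bw_y :: "nat \<Rightarrow> real" where "bw_y n = fst (borwein n)"
definition bw_z :: "nat \<Rightarrow> real" where "bw_z n = snd (borwein n)"
definition bw_pi :: "nat \<Rightarrow> real" where "bw_pi n = 1 / bw_z n"

end

theory Submission
  imports Defs
begin

text \<open>Put u^2 = a_(2n+1) and v^2 = b_(2n+1). Two Gauss--Legendre steps give
  a_(2n+2) = (u^2 + v^2)/2, b_(2n+2) = u v and a_(2n+3) = ((u + v)/2)^2, all rational in u, v.
  By induction, y_n^2 = (a_2n - b_2n)/(a_2n + b_2n) and z_n = s_2n / a_(2n+1)^2: the first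
  relation gives 1 - y_n^4 = (v/u)^4, so the fourth root in the Borwein step is just v/u and
  y_(n+1) = (u - v)/(u + v); the z-recurrence then becomes a rational identity in u and v.\<close>

lemma gl_a_0 [simp]: "gl_a 0 = 1"
  and gl_b_0 [simp]: "gl_b 0 = 1 / sqrt 2"
  and gl_s_0 [simp]: "gl_s 0 = 1 / 4"
  by (simp_all add: gl_a_def gl_b_def gl_s_def)

lemma gl_a_Suc: "gl_a (Suc n) = (gl_a n + gl_b n) / 2"
  and gl_b_Suc: "gl_b (Suc n) = sqrt (gl_a n * gl_b n)"
  and gl_s_Suc: "gl_s (Suc n) = gl_s n - 2 ^ n * (gl_a n - gl_a (Suc n))^2"
  by (simp_all add: gl_a_def gl_b_def gl_s_def Let_def split: prod.splits)

lemma bw_y_0: "bw_y 0 = sqrt 2 - 1"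
  and bw_z_0: "bw_z 0 = 2 * (sqrt 2 - 1)^2"
  by (simp_all add: bw_y_def bw_z_def)

lemma bw_y_Suc: "bw_y (Suc n) = (1 - root 4 (1 - bw_y n ^ 4)) / (1 + root 4 (1 - bw_y n ^ 4))"
  and bw_z_Suc: "bw_z (Suc n) = bw_z n * (1 + bw_y (Suc n))^4
      - 2 ^ (2*n+3) * bw_y (Suc n) * (1 + bw_y (Suc n) + bw_y (Suc n)^2)"
  by (simp_all add: bw_y_def bw_z_def Let_def split: prod.splits)

lemma gl_a_pos: "gl_a n > 0" and gl_b_pos: "gl_b n > 0"
  by (induction n) (auto simp: gl_a_Suc gl_b_Suc)

lemma gl_b_Suc_sq: "gl_b (Suc n)^2 = gl_a n * gl_b n"
  using gl_a_pos gl_b_pos by (simp add: gl_b_Suc less_imp_le)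

lemma gl_s_Suc_eq: "gl_s (Suc n) = gl_s n - 2^n * (gl_a (Suc n)^2 - gl_b (Suc n)^2)"
proof -
  have "(gl_a n - gl_a (Suc n))^2 = gl_a (Suc n)^2 - gl_b (Suc n)^2"
    unfolding gl_b_Suc_sq gl_a_Suc by (simp add: power2_eq_square field_simps)
  then show ?thesis by (simp add: gl_s_Suc)
qed

lemma gl_ratio_sq:
  "((gl_a n - gl_b n) / (gl_a n + gl_b n))^2 = 1 - (gl_b (Suc n) / gl_a (Suc n))^2"
proof -
  have "gl_a n + gl_b n > 0" using gl_a_pos gl_b_pos by (simp add: add_pos_pos)
  then show ?thesis unfolding power_divide gl_b_Suc_sq gl_a_Suc
    by (simp add: divide_simps power2_eq_square) algebra
qed

lemma gl_two_steps:
  assumes "gl_a (Suc m) = u^2" "gl_b (Suc m) = v^2" "u > 0" "v > 0"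
  shows "gl_a (Suc (Suc m)) = (u^2 + v^2) / 2"
    and "gl_b (Suc (Suc m)) = u * v"
    and "gl_a (Suc (Suc (Suc m))) = ((u + v) / 2)^2"
    and "gl_s (Suc (Suc m)) = gl_s m - 2^m * (u^4 - v^4) - 2^Suc m * ((u^2 - v^2) / 2)^2"
    and "(gl_a (Suc (Suc m)) - gl_b (Suc (Suc m))) / (gl_a (Suc (Suc m)) + gl_b (Suc (Suc m)))
         = ((u - v) / (u + v))^2"
proof -
  show a2: "gl_a (Suc (Suc m)) = (u^2 + v^2) / 2" and b2: "gl_b (Suc (Suc m)) = u * v"
    using assms by (simp_all add: gl_a_Suc[of "Suc m"] gl_b_Suc[of "Suc m"] real_sqrt_mult)
  show "gl_a (Suc (Suc (Suc m))) = ((u + v) / 2)^2"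
    unfolding gl_a_Suc[of "Suc (Suc m)"] a2 b2 by (simp add: power2_eq_square field_simps)
  show "gl_s (Suc (Suc m)) = gl_s m - 2^m * (u^4 - v^4) - 2^Suc m * ((u^2 - v^2) / 2)^2"
    unfolding gl_s_Suc[of "Suc m"] gl_s_Suc_eq[of m] assms(1,2) a2 by (simp add: field_simps)
  have halves: "(u^2 + v^2) / 2 - u * v = (u - v)^2 / 2" "(u^2 + v^2) / 2 + u * v = (u + v)^2 / 2"
    by (simp_all add: power2_eq_square field_simps)
  show "(gl_a (Suc (Suc m)) - gl_b (Suc (Suc m))) / (gl_a (Suc (Suc m)) + gl_b (Suc (Suc m)))
         = ((u - v) / (u + v))^2"
    unfolding a2 b2 halves by (simp add: power_divide)
qed

lemma quartic_y_step:
  fixes u v y :: real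
  assumes "u > 0" "v > 0" "y^4 = 1 - (v / u)^4"
  shows "(1 - root 4 (1 - y^4)) / (1 + root 4 (1 - y^4)) = (u - v) / (u + v)"
proof -
  have "root 4 (1 - y^4) = v / u"
    using assms by (simp add: real_root_power_cancel)
  moreover have "(1 - v / u) / (1 + v / u) = (u - v) / (u + v)"
    using assms(1,2) by (simp add: divide_simps)
  ultimately show ?thesis by simp
qed

lemma quartic_z_step:
  fixes u v S P :: real
  assumes "u > 0" "v > 0"
  defines "t \<equiv> (u - v) / (u + v)"
  shows "S / u^4 * (1 + t)^4 - 8 * P * t * (1 + t + t^2)
       = (S - P * (u^4 - v^4) - 2 * P * ((u^2 - v^2) / 2)^2) / ((u + v) / 2)^4"
proof -
  have "u + v \<noteq> 0" using assms by simp
  then show ?thesis using assms unfolding t_def power_divide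
    by (simp add: divide_simps) algebra
qed

lemma bw_gl_correspondence:
  "bw_y n ^ 2 = (gl_a (2*n) - gl_b (2*n)) / (gl_a (2*n) + gl_b (2*n))
   \<and> bw_z n = gl_s (2*n) / gl_a (2*n+1) ^ 2"
proof (induction n)
  case 0
  define q :: real where "q = sqrt 2"
  have q: "q > 0" "q^2 = 2" "(q - 1) * (q + 1) = 1"
    by (simp_all add: q_def algebra_simps)
  then have "(q - 1)^2 * (q + 1) = q - 1" "(q - 1)^2 * (q + 1)^2 = 1"
    by (metis mult.assoc mult.right_neutral power2_eq_square,
        metis power_mult_distrib power_one)
  then have "bw_y 0 ^ 2 = (1 - 1 / q) / (1 + 1 / q)" "bw_z 0 = (1 / 4) / ((1 + 1 / q) / 2)^2"
    using q(1,2) by (simp_all add: bw_y_0 bw_z_0 flip: q_def add: divide_simps)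
  then show ?case by (simp add: q_def gl_a_Suc)
next
  case (Suc n)
  define m where "m = 2 * n"
  define u where "u = sqrt (gl_a (Suc m))"
  define v where "v = sqrt (gl_b (Suc m))"
  have uv: "gl_a (Suc m) = u^2" "gl_b (Suc m) = v^2" "u > 0" "v > 0"
    using gl_a_pos[of "Suc m"] gl_b_pos[of "Suc m"] by (simp_all add: u_def v_def less_imp_le)
  have IH: "bw_y n ^ 2 = (gl_a m - gl_b m) / (gl_a m + gl_b m)" "bw_z n = gl_s m / u^4"
    using Suc.IH uv(1) by (simp_all add: m_def)
  have "bw_y n ^ 4 = (bw_y n ^ 2)^2" by simp
  also have "\<dots> = 1 - (gl_b (Suc m) / gl_a (Suc m))^2"
    unfolding IH(1) by (rule gl_ratio_sq)
  also have "\<dots> = 1 - (v / u)^4"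
    unfolding uv(1,2) by (simp add: power_divide flip: power_mult)
  finally have y: "bw_y (Suc n) = (u - v) / (u + v)"
    unfolding bw_y_Suc by (rule quartic_y_step[OF uv(3,4)])
  note two_steps = gl_two_steps[OF uv]
  have "bw_y (Suc n) ^ 2
      = (gl_a (Suc (Suc m)) - gl_b (Suc (Suc m))) / (gl_a (Suc (Suc m)) + gl_b (Suc (Suc m)))"
    unfolding y two_steps(5) ..
  moreover have "bw_z (Suc n) = gl_s (Suc (Suc m)) / gl_a (Suc (Suc (Suc m))) ^ 2"
  proof -
    have "(2::real) ^ (2*n+3) = 8 * 2^m" by (simp add: m_def power_add)
    then show ?thesis
      unfolding bw_z_Suc y IH(2) two_steps(3,4) using quartic_z_step[OF uv(3,4)]
      by (simp flip: power_mult)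
  qed
  ultimately show ?case by (simp add: m_def)
qed

theorem corollary1:
  fixes n :: nat
  shows "bw_pi n = (gl_a (2*n+1))^2 / gl_s (2*n)"
  using bw_gl_correspondence[of n] by (simp add: bw_pi_def)

end
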